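(* Let $G$ be a simplicial group with $G_0=1$, let $\tilde G$ be its dummy, and let $p\colon\tilde G\to G$ be the simplicial homomorphism given in dimension $n$ by evaluation at $i_n=\mathrm{id}\colon[n]\to[n]\in B^n_n$. Then $p$ is surjective.
   Context: Let $B$ be the cosimplicial simplicial pointed set with $B^n_m$ the set of non-strictly increasing partial maps $b\colon[m]\dashrightarrow[n]$, marked element the map with empty domain; the simplicial structure in $m$ is by precomposition (domains pulled back) and the cosimplicial structure in $n$ by postcomposition. The dummy $\tilde G$ is the simplicial group with $\tilde G_n$ the group of base-point-preserving simplicial maps $B^n\to G$ (pointwise multiplication), structure homomorphisms induced by the cosimplicial structure of $B$. *)

theory Defs
  imports "HOL-Algebra.Group" "HOL-Library.FuncSet"
begin

definition delta_hom :: "nat \<Rightarrow> nat \<Rightarrow> (nat \<Rightarrow> nat) set" where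
  "delta_hom m n = {\<theta>. \<theta> \<in> {..m} \<rightarrow>\<^sub>E {..n} \<and> mono_on {..m} \<theta>}"

definition delta_id :: "nat \<Rightarrow> nat \<Rightarrow> nat" where
  "delta_id n = restrict (\<lambda>i. i) {..n}"

definition delta_comp :: "nat \<Rightarrow> (nat \<Rightarrow> nat) \<Rightarrow> (nat \<Rightarrow> nat) \<Rightarrow> nat \<Rightarrow> nat" where
  "delta_comp k \<theta> \<psi> = restrict (\<theta> \<circ> \<psi>) {..k}"

definition simplicial_group ::
  "(nat \<Rightarrow> 'g monoid) \<Rightarrow> (nat \<Rightarrow> nat \<Rightarrow> (nat \<Rightarrow> nat) \<Rightarrow> 'g \<Rightarrow> 'g) \<Rightarrow> bool" where
  "simplicial_group G act \<longleftrightarrow>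
     (\<forall>n. group (G n)) \<and>
     (\<forall>m n \<theta>. \<theta> \<in> delta_hom m n \<longrightarrow> act m n \<theta> \<in> hom (G n) (G m)) \<and>
     (\<forall>n x. x \<in> carrier (G n) \<longrightarrow> act n n (delta_id n) x = x) \<and>
     (\<forall>k m n \<theta> \<psi> x. \<theta> \<in> delta_hom m n \<longrightarrow> \<psi> \<in> delta_hom k m \<longrightarrow> x \<in> carrier (G n) \<longrightarrow>
         act k n (delta_comp k \<theta> \<psi>) x = act k m \<psi> (act m n \<theta> x))"

definition Bset :: "nat \<Rightarrow> nat \<Rightarrow> (nat \<Rightarrow> nat option) set" where
  "Bset n m = {b. dom b \<subseteq> {..m} \<and> ran b \<subseteq> {..n} \<and>
      (\<forall>i j x y. b i = Some x \<longrightarrow> b j = Some y \<longrightarrow> i \<le> j \<longrightarrow> x \<le> y)}"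

definition B_pre :: "nat \<Rightarrow> (nat \<Rightarrow> nat) \<Rightarrow> (nat \<Rightarrow> nat option) \<Rightarrow> nat \<Rightarrow> nat option" where
  "B_pre k \<theta> b = (\<lambda>i. if i \<le> k then b (\<theta> i) else None)"

definition B_post :: "(nat \<Rightarrow> nat) \<Rightarrow> (nat \<Rightarrow> nat option) \<Rightarrow> nat \<Rightarrow> nat option" where
  "B_post \<phi> b = (\<lambda>i. map_option \<phi> (b i))"

(* base-point-preserving simplicial maps B^n -> G *)
definition dummy_carrier ::
  "(nat \<Rightarrow> 'g monoid) \<Rightarrow> (nat \<Rightarrow> nat \<Rightarrow> (nat \<Rightarrow> nat) \<Rightarrow> 'g \<Rightarrow> 'g) \<Rightarrow> nat
     \<Rightarrow> (nat \<Rightarrow> (nat \<Rightarrow> nat option) \<Rightarrow> 'g) set" where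
  "dummy_carrier G act n = {f.
     (\<forall>m. \<forall>b\<in>Bset n m. f m b \<in> carrier (G m)) \<and>
     (\<forall>m b. b \<notin> Bset n m \<longrightarrow> f m b = undefined) \<and>
     (\<forall>m. f m Map.empty = \<one>\<^bsub>G m\<^esub>) \<and>
     (\<forall>k m \<theta> b. \<theta> \<in> delta_hom k m \<longrightarrow> b \<in> Bset n m \<longrightarrow>
         f k (B_pre k \<theta> b) = act k m \<theta> (f m b))}"

definition dummy ::
  "(nat \<Rightarrow> 'g monoid) \<Rightarrow> (nat \<Rightarrow> nat \<Rightarrow> (nat \<Rightarrow> nat) \<Rightarrow> 'g \<Rightarrow> 'g) \<Rightarrow> nat
     \<Rightarrow> (nat \<Rightarrow> (nat \<Rightarrow> nat option) \<Rightarrow> 'g) monoid" where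
  "dummy G act n = \<lparr> carrier = dummy_carrier G act n,
     mult = (\<lambda>f g. \<lambda>m b. if b \<in> Bset n m then f m b \<otimes>\<^bsub>G m\<^esub> g m b else undefined),
     one = (\<lambda>m b. if b \<in> Bset n m then \<one>\<^bsub>G m\<^esub> else undefined) \<rparr>"

definition dummy_act :: "nat \<Rightarrow> (nat \<Rightarrow> nat) \<Rightarrow> (nat \<Rightarrow> (nat \<Rightarrow> nat option) \<Rightarrow> 'g)
     \<Rightarrow> nat \<Rightarrow> (nat \<Rightarrow> nat option) \<Rightarrow> 'g" where
  "dummy_act m \<phi> f = (\<lambda>k b. if b \<in> Bset m k then f k (B_post \<phi> b) else undefined)"

definition i_elem :: "nat \<Rightarrow> nat \<Rightarrow> nat option" where
  "i_elem n = (\<lambda>i. if i \<le> n then Some i else None)"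

definition dummy_proj :: "nat \<Rightarrow> (nat \<Rightarrow> (nat \<Rightarrow> nat option) \<Rightarrow> 'g) \<Rightarrow> 'g" where
  "dummy_proj n f = f n (i_elem n)"

end

theory Submission
  imports Defs
begin

text \<open>Given \<open>y \<in> G\<^sub>n\<close> we need a base-point-preserving simplicial map \<open>f : B\<^sup>n \<rightarrow> G\<close> with
  \<open>f(i\<^sub>n) = y\<close>. On a total simplex \<open>b : [m] \<rightarrow> [n]\<close> the value is forced to be \<open>b\<^sup>* y\<close>. A partial
  simplex is encoded by its indicators \<open>i \<mapsto> [j \<le> b i]\<close>, \<open>j = 1, \<dots>, n\<close>, which are monotone in \<open>i\<close>
  only where \<open>b\<close> is defined. Freeing one coordinate at a time, a coordinate is written as a
  \<int>-combination of monotone step functions and \<open>f\<close> is extended multiplicatively along that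
  decomposition. Steps pull back to steps along any simplicial operator \<open>\<theta>\<close> (via the lower
  adjoint of \<open>\<theta>\<close>), and a telescoping product shows the extension stays natural. The empty simplex
  goes to \<open>1\<close> because constant operators factor through the trivial group \<open>G\<^sub>0\<close>.\<close>

fun mprod :: "('a, 'b) monoid_scheme \<Rightarrow> 'a list \<Rightarrow> 'a" where
  "mprod H [] = \<one>\<^bsub>H\<^esub>"
| "mprod H (a # as) = a \<otimes>\<^bsub>H\<^esub> mprod H as"

context group begin

lemma mprod_closed: "set xs \<subseteq> carrier G \<Longrightarrow> mprod G xs \<in> carrier G"
  by (induction xs) auto

lemma mprod_append:
  "set xs \<subseteq> carrier G \<Longrightarrow> set ys \<subseteq> carrier G \<Longrightarrow> mprod G (xs @ ys) = mprod G xs \<otimes> mprod G ys"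
  by (induction xs) (auto simp: mprod_closed m_assoc)

lemma mprod_all_one: "set xs \<subseteq> {\<one>} \<Longrightarrow> mprod G xs = \<one>"
  by (induction xs) auto

lemma mprod_upt_snoc:
  assumes "\<And>l. f l \<in> carrier G"
  shows "mprod G (map f [0..<Suc N]) = mprod G (map f [0..<N]) \<otimes> f N"
proof -
  have "mprod G (map f [0..<N] @ [f N]) = mprod G (map f [0..<N]) \<otimes> f N"
    using mprod_append[of "map f [0..<N]" "[f N]"] assms by (simp add: image_subset_iff)
  then show ?thesis by simp
qed

lemma mprod_upt_single:
  assumes "\<And>l. l < N \<Longrightarrow> l \<noteq> p \<Longrightarrow> f l = \<one>" and f: "\<And>l. f l \<in> carrier G"
  shows "mprod G (map f [0..<N]) = (if p < N then f p else \<one>)"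
  using assms(1)
proof (induction N)
  case (Suc N)
  have "mprod G (map f [0..<Suc N]) = mprod G (map f [0..<N]) \<otimes> f N"
    by (rule mprod_upt_snoc[OF f])
  also have "\<dots> = (if p < N then f p else \<one>) \<otimes> f N"
    using Suc by simp
  also have "\<dots> = (if p < Suc N then f p else \<one>)"
  proof -
    have "N \<noteq> p \<Longrightarrow> f N = \<one>" using Suc.prems by simp
    then show ?thesis using f by (cases "p < N"; cases "p = N") auto
  qed
  finally show ?case .
qed simp

lemma mprod_upt_split:
  assumes "J < K" and "\<And>j. f j \<in> carrier G"
  shows "mprod G (map f [0..<K]) = mprod G (map f [0..<J]) \<otimes> f J \<otimes> mprod G (map f [Suc J..<K])"
proof -
  have "[0..<K] = [0..<J] @ J # [Suc J..<K]"
    using assms(1) upt_add_eq_append[of 0 J "K - J"] upt_conv_Cons[of J K] by simp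
  then show ?thesis
    using assms(2) mprod_append[of "map f [0..<J]" "f J # map f [Suc J..<K]"]
    by (simp add: m_assoc mprod_closed image_subset_iff)
qed

end

lemma hom_mprod:
  assumes "h \<in> hom G H" "group G" "group H" "set xs \<subseteq> carrier G"
  shows "h (mprod G xs) = mprod H (map h xs)"
  using assms(4)
  by (induction xs) (auto simp: hom_one[OF assms(1-3)] hom_mult[OF assms(1)] group.mprod_closed[OF assms(2)])

definition pred_val :: "(nat \<Rightarrow> nat) \<Rightarrow> nat \<Rightarrow> nat" where
  "pred_val v l = (if l = 0 then 0 else v (l - 1))"

definition increment :: "(nat \<Rightarrow> nat) \<Rightarrow> nat \<Rightarrow> int" where
  "increment v l = int (v l) - int (pred_val v l)"

text \<open>For monotone \<open>\<theta>\<close> this is the lower adjoint of \<open>\<theta>\<close>, with \<open>Suc m'\<close> playing the role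
  of \<open>\<infinity>\<close>: see \<open>lower_adjoint_le_iff\<close>.\<close>

definition lower_adjoint :: "nat \<Rightarrow> (nat \<Rightarrow> nat) \<Rightarrow> nat \<Rightarrow> nat" where
  "lower_adjoint m' \<theta> l = (LEAST j. j = Suc m' \<or> j \<le> m' \<and> l \<le> \<theta> j)"

lemma lower_adjoint_least: "j \<le> m' \<Longrightarrow> l \<le> \<theta> j \<Longrightarrow> lower_adjoint m' \<theta> l \<le> j"
  unfolding lower_adjoint_def by (rule Least_le) simp

lemma lower_adjoint_le_Suc: "lower_adjoint m' \<theta> l \<le> Suc m'"
  unfolding lower_adjoint_def by (rule Least_le) simp

lemma lower_adjoint_reached: "lower_adjoint m' \<theta> l \<le> m' \<Longrightarrow> l \<le> \<theta> (lower_adjoint m' \<theta> l)"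
  using LeastI[of "\<lambda>j. j = Suc m' \<or> j \<le> m' \<and> l \<le> \<theta> j" "Suc m'"]
  unfolding lower_adjoint_def by auto

lemma lower_adjoint_below: "j < lower_adjoint m' \<theta> l \<Longrightarrow> j \<le> m' \<and> \<theta> j < l"
  using lower_adjoint_least[of j m' l \<theta>] lower_adjoint_le_Suc[of m' \<theta> l] by fastforce

lemma lower_adjoint_le_iff:
  assumes "mono_on {..m'} \<theta>" "i \<le> m'"
  shows "lower_adjoint m' \<theta> l \<le> i \<longleftrightarrow> l \<le> \<theta> i"
proof
  assume le: "lower_adjoint m' \<theta> l \<le> i"
  then have "l \<le> \<theta> (lower_adjoint m' \<theta> l)" using assms(2) lower_adjoint_reached by simp
  also have "\<dots> \<le> \<theta> i" using assms le by (auto simp: mono_on_def)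
  finally show "l \<le> \<theta> i" .
qed (use assms(2) lower_adjoint_least in blast)

context group begin

lemma telescope_prefix:
  assumes mono: "mono_on {..m'} \<theta>" and A: "\<And>j. A j \<in> carrier G"
  shows "mprod G (map (\<lambda>l. A (lower_adjoint m' \<theta> l) [^] increment v l) [0..<Suc l])
       = mprod G (map (\<lambda>j. A j [^] increment (\<lambda>a. v (\<theta> a)) j) [0..<lower_adjoint m' \<theta> l])
         \<otimes> A (lower_adjoint m' \<theta> l) [^] (int (v l) - int (pred_val (\<lambda>a. v (\<theta> a)) (lower_adjoint m' \<theta> l)))"
proof (induction l)
  case 0
  have "lower_adjoint m' \<theta> 0 = 0" using lower_adjoint_least[of 0 m' 0 \<theta>] by simp
  then show ?case using A by (simp add: increment_def pred_val_def)
next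
  case (Suc l)
  let ?F = "\<lambda>l. A (lower_adjoint m' \<theta> l) [^] increment v l"
  let ?H = "\<lambda>j. A j [^] increment (\<lambda>a. v (\<theta> a)) j"
  let ?J = "lower_adjoint m' \<theta> l" and ?J' = "lower_adjoint m' \<theta> (Suc l)"
  have H: "\<And>j. ?H j \<in> carrier G" using A by simp
  have prefix: "mprod G (map ?F [0..<Suc (Suc l)]) = mprod G (map ?H [0..<?J]) \<otimes>
      A ?J [^] (int (v l) - int (pred_val (\<lambda>a. v (\<theta> a)) ?J)) \<otimes> ?F (Suc l)"
    using Suc mprod_upt_snoc[of ?F "Suc l"] A by (simp del: upt_Suc)
  have "?J \<le> ?J'"
    using lower_adjoint_below[of ?J' m' \<theta> l] lower_adjoint_reached[of m' \<theta> "Suc l"] by force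
  then consider "?J' = ?J" | "?J < ?J'" by linarith
  then show ?case
  proof cases
    case 1
    then show ?thesis
      using prefix A H
      by (simp add: m_assoc mprod_closed image_subset_iff int_pow_mult[symmetric] increment_def pred_val_def)
  next
    case 2
    text \<open>Between the two adjoint values \<open>\<theta>\<close> is constantly \<open>l\<close>, so those factors vanish.\<close>
    have const: "\<theta> j = l" if "?J \<le> j" "j < ?J'" for j
    proof -
      have "j \<le> m' \<and> \<theta> j < Suc l" using lower_adjoint_below that(2) by blast
      moreover have "l \<le> \<theta> j" using lower_adjoint_le_iff[OF mono] that(1) calculation by blast
      ultimately show ?thesis by simp
    qed
    have "mprod G (map ?H [Suc ?J..<?J']) = \<one>"
      by (rule mprod_all_one) (auto simp: const increment_def pred_val_def)
    then have "mprod G (map ?H [0..<?J']) = mprod G (map ?H [0..<?J]) \<otimes> ?H ?J"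
      using mprod_upt_split[OF 2 H] H by (simp add: mprod_closed image_subset_iff)
    moreover have "pred_val (\<lambda>a. v (\<theta> a)) ?J' = v l"
      using 2 const[of "?J' - 1"] by (simp add: pred_val_def)
    ultimately show ?thesis
      using prefix const[of ?J] 2 by (simp add: increment_def pred_val_def del: upt_Suc)
  qed
qed

lemma telescope:
  assumes "\<theta> \<in> delta_hom m' m" and A: "\<And>j. A j \<in> carrier G" and "A (Suc m') = \<one>"
  shows "mprod G (map (\<lambda>l. A (lower_adjoint m' \<theta> l) [^] increment v l) [0..<Suc m])
       = mprod G (map (\<lambda>j. A j [^] increment (\<lambda>a. v (\<theta> a)) j) [0..<Suc m'])"
proof -
  let ?H = "\<lambda>j. A j [^] increment (\<lambda>a. v (\<theta> a)) j" and ?J = "lower_adjoint m' \<theta> m"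
  have mono: "mono_on {..m'} \<theta>" and range: "\<And>j. j \<le> m' \<Longrightarrow> \<theta> j \<le> m"
    using assms(1) by (auto simp: delta_hom_def)
  have H: "\<And>j. ?H j \<in> carrier G" using A by simp
  note prefix = telescope_prefix[where A = A and v = v, OF mono A]
  show ?thesis
  proof (cases "?J \<le> m'")
    case False
    then have "?J = Suc m'" using lower_adjoint_le_Suc[of m' \<theta> m] by simp
    then show ?thesis using prefix assms(3) H by (simp add: mprod_upt_snoc mprod_closed image_subset_iff del: upt_Suc)
  next
    case True
    have const: "\<theta> j = m" if "?J \<le> j" "j \<le> m'" for j
      using lower_adjoint_le_iff[OF mono that(2)] that range[OF that(2)] by simp
    have "mprod G (map ?H [Suc ?J..<Suc m']) = \<one>"
      by (rule mprod_all_one) (auto simp: const increment_def pred_val_def)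
    then have "mprod G (map ?H [0..<Suc m']) = mprod G (map ?H [0..<?J]) \<otimes> ?H ?J"
      using mprod_upt_split[of ?J "Suc m'" ?H] True H by (simp add: mprod_closed image_subset_iff)
    then show ?thesis using prefix const[OF order.refl True] by (simp add: increment_def)
  qed
qed

end

text \<open>\<open>run_length k w i\<close> is the largest \<open>r \<le> k\<close> such that \<open>w 1 i, \<dots>, w r i\<close> are all nonzero.\<close>

fun run_length :: "nat \<Rightarrow> (nat \<Rightarrow> nat \<Rightarrow> nat) \<Rightarrow> nat \<Rightarrow> nat" where
  "run_length 0 w i = 0"
| "run_length (Suc k) w i = (if run_length k w i = k \<and> w (Suc k) i \<noteq> 0 then Suc k else run_length k w i)"

definition upstep :: "nat \<Rightarrow> nat \<Rightarrow> nat" where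
  "upstep l i = (if l \<le> i then 1 else 0)"

lemma run_length_le: "run_length k w i \<le> k"
  by (induction k) auto

lemma run_length_cong: "(\<And>j. w j i = w' j i') \<Longrightarrow> run_length k w i = run_length k w' i'"
  by (induction k) auto

lemma run_length_mono:
  "(\<And>j. 0 < j \<Longrightarrow> j \<le> k \<Longrightarrow> w j i \<noteq> 0 \<Longrightarrow> w j i' \<noteq> 0) \<Longrightarrow> run_length k w i \<le> run_length k w i'"
proof (induction k)
  case (Suc k)
  then show ?case using run_length_le[of k w i'] by fastforce
qed simp

lemma run_length_zero: "run_length k (\<lambda>_ _. 0) i = 0"
  by (induction k) auto

lemma run_length_upstep: "(\<And>j. w j i = upstep j i) \<Longrightarrow> run_length k w i = min k i"
  by (induction k) (auto simp: upstep_def)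

lemma upstep_mono: "mono_on A (upstep l)"
  by (auto simp: mono_on_def upstep_def)

lemma increment_upstep: "p \<le> Suc m \<Longrightarrow> l \<le> m \<Longrightarrow> increment (upstep p) l = (if l = p then 1 else 0)"
  by (cases l) (auto simp: increment_def pred_val_def upstep_def)

lemma upstep_pullback:
  assumes "\<theta> \<in> delta_hom m' m" "i \<le> m'"
  shows "upstep l (\<theta> i) = upstep (lower_adjoint m' \<theta> l) i"
  using assms lower_adjoint_le_iff[of m' \<theta> i l] by (simp add: delta_hom_def upstep_def)

definition mono_coords :: "nat \<Rightarrow> nat \<Rightarrow> nat \<Rightarrow> (nat \<Rightarrow> nat \<Rightarrow> nat) \<Rightarrow> bool" where
  "mono_coords k n m w \<longleftrightarrow> (\<forall>j. k < j \<and> j \<le> n \<longrightarrow> mono_on {..m} (w j))"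

lemma mono_coords_update:
  "mono_coords (Suc k) n m w \<Longrightarrow> mono_on {..m} u \<Longrightarrow> mono_coords k n m (w(Suc k := u))"
  by (auto simp: mono_coords_def Suc_le_eq)

lemma mono_coords_pullback:
  "mono_coords k n m w \<Longrightarrow> \<theta> \<in> delta_hom m' m \<Longrightarrow> mono_coords k n m' (\<lambda>j i. w j (\<theta> i))"
  by (auto simp: mono_coords_def delta_hom_def mono_on_def PiE_iff)

lemma mono_coords_top: "mono_coords n n m w"
  by (auto simp: mono_coords_def)

lemma run_length_delta_hom: "mono_coords 0 n m w \<Longrightarrow> restrict (run_length n w) {..m} \<in> delta_hom m n"
  unfolding delta_hom_def mono_coords_def
  by (auto simp: run_length_le mono_on_def intro!: run_length_mono) (metis le_0_eq le_trans not_le)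

locale dummy_lift =
  fixes G :: "nat \<Rightarrow> 'g monoid" and act :: "nat \<Rightarrow> nat \<Rightarrow> (nat \<Rightarrow> nat) \<Rightarrow> 'g \<Rightarrow> 'g"
    and n :: nat and y :: 'g
  assumes simplicial: "simplicial_group G act"
    and trivial_G0: "carrier (G 0) = {\<one>\<^bsub>G 0\<^esub>}"
    and y: "y \<in> carrier (G n)"
begin

lemma group_G: "group (G m)"
  using simplicial by (simp add: simplicial_group_def)

lemma act_hom: "\<theta> \<in> delta_hom m' m \<Longrightarrow> act m' m \<theta> \<in> hom (G m) (G m')"
  using simplicial by (simp add: simplicial_group_def)

lemma act_group_hom: "\<theta> \<in> delta_hom m' m \<Longrightarrow> group_hom (G m) (G m') (act m' m \<theta>)"
  using act_hom group_G by (simp add: group_hom_def group_hom_axioms_def)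

lemma act_comp:
  "\<theta> \<in> delta_hom m n' \<Longrightarrow> \<psi> \<in> delta_hom k m \<Longrightarrow> x \<in> carrier (G n') \<Longrightarrow>
   act k n' (delta_comp k \<theta> \<psi>) x = act k m \<psi> (act m n' \<theta> x)"
  using simplicial by (simp add: simplicial_group_def)

lemma act_id: "x \<in> carrier (G m) \<Longrightarrow> act m m (delta_id m) x = x"
  using simplicial by (simp add: simplicial_group_def)

lemma act_closed: "\<theta> \<in> delta_hom m' m \<Longrightarrow> x \<in> carrier (G m) \<Longrightarrow> act m' m \<theta> x \<in> carrier (G m')"
  using act_hom by (auto simp: hom_def)

lemma act_const: "act m n (restrict (\<lambda>_. 0) {..m}) y = \<one>\<^bsub>G m\<^esub>"
proof -
  let ?to0 = "restrict (\<lambda>_::nat. 0::nat) {..m}" and ?from0 = "restrict (\<lambda>_::nat. 0::nat) {..0}"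
  have to0: "?to0 \<in> delta_hom m 0" and from0: "?from0 \<in> delta_hom 0 n"
    by (auto simp: delta_hom_def mono_on_def)
  have "act 0 n ?from0 y \<in> carrier (G 0)" using act_closed[OF from0 y] .
  then have "act 0 n ?from0 y = \<one>\<^bsub>G 0\<^esub>" using trivial_G0 by simp
  moreover have "delta_comp m ?from0 ?to0 = ?to0" by (auto simp: delta_comp_def restrict_def)
  ultimately have "act m n ?to0 y = act m 0 ?to0 \<one>\<^bsub>G 0\<^esub>" using act_comp[OF from0 to0 y] by simp
  also have "\<dots> = \<one>\<^bsub>G m\<^esub>" using group_hom.hom_one[OF act_group_hom[OF to0]] .
  finally show ?thesis .
qed

text \<open>At level \<open>0\<close> the coordinates are monotone and \<open>run_length\<close> reads off a simplicial operator
  \<open>[m] \<rightarrow> [n]\<close>, which is applied to \<open>y\<close>. Level \<open>Suc k\<close> frees coordinate \<open>Suc k\<close>, using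
  \<open>w (Suc k) = (\<Sum>l\<le>m. increment (w (Suc k)) l \<cdot> upstep l)\<close> on \<open>{..m}\<close>, relative to the value at
  the zero coordinate.\<close>

fun lift :: "nat \<Rightarrow> nat \<Rightarrow> (nat \<Rightarrow> nat \<Rightarrow> nat) \<Rightarrow> 'g" where
  "lift 0 m w = act m n (restrict (run_length n w) {..m}) y"
| "lift (Suc k) m w =
     mprod (G m) (map (\<lambda>l. (lift k m (w(Suc k := upstep l)) \<otimes>\<^bsub>G m\<^esub> inv\<^bsub>G m\<^esub> lift k m (w(Suc k := (\<lambda>_. 0))))
        [^]\<^bsub>G m\<^esub> increment (w (Suc k)) l) [0..<Suc m])
     \<otimes>\<^bsub>G m\<^esub> lift k m (w(Suc k := (\<lambda>_. 0)))"

definition lift_factor :: "nat \<Rightarrow> nat \<Rightarrow> (nat \<Rightarrow> nat \<Rightarrow> nat) \<Rightarrow> nat \<Rightarrow> 'g" where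
  "lift_factor k m w l = lift k m (w(Suc k := upstep l)) \<otimes>\<^bsub>G m\<^esub> inv\<^bsub>G m\<^esub> lift k m (w(Suc k := (\<lambda>_. 0)))"

lemma lift_Suc:
  "lift (Suc k) m w = mprod (G m) (map (\<lambda>l. lift_factor k m w l [^]\<^bsub>G m\<^esub> increment (w (Suc k)) l) [0..<Suc m])
     \<otimes>\<^bsub>G m\<^esub> lift k m (w(Suc k := (\<lambda>_. 0)))"
  by (simp add: lift_factor_def)

declare lift.simps(2) [simp del]

lemma lift_cong: "(\<And>j i. i \<le> m \<Longrightarrow> w j i = w' j i) \<Longrightarrow> lift k m w = lift k m w'"
proof (induction k arbitrary: w w')
  case 0
  have "run_length n w i = run_length n w' i" if "i \<le> m" for i
    using 0 that by (intro run_length_cong) simp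
  then have "restrict (run_length n w) {..m} = restrict (run_length n w') {..m}"
    by (auto simp: restrict_def)
  then show ?case by simp
next
  case (Suc k)
  have update: "lift k m (w(Suc k := u)) = lift k m (w'(Suc k := u))" for u
    by (rule Suc.IH) (simp add: Suc.prems)
  have incr: "increment (w (Suc k)) l = increment (w' (Suc k)) l" if "l \<le> m" for l
    using that Suc.prems by (auto simp: increment_def pred_val_def)
  show ?case
    unfolding lift_Suc lift_factor_def update
    by (intro arg_cong2[where f = "mult (G m)"] arg_cong[where f = "mprod (G m)"] map_cong refl)
      (auto simp: incr)
qed

lemma lift_closed: "mono_coords k n m w \<Longrightarrow> lift k m w \<in> carrier (G m)"
proof (induction k arbitrary: w)
  case 0
  then show ?case using act_closed[OF run_length_delta_hom y] by simp
next
  case (Suc k)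
  interpret group "G m" by (rule group_G)
  have "lift k m (w(Suc k := u)) \<in> carrier (G m)" if "mono_on {..m} u" for u
    using Suc mono_coords_update that by blast
  note updates = this[OF upstep_mono] this[OF mono_on_const]
  then have "lift_factor k m w l \<in> carrier (G m)" for l
    unfolding lift_factor_def by simp
  then show ?case
    using updates unfolding lift_Suc by (intro m_closed mprod_closed) (auto simp del: upt_Suc)
qed

lemma lift_update_closed:
  "mono_coords (Suc k) n m w \<Longrightarrow> mono_on {..m} u \<Longrightarrow> lift k m (w(Suc k := u)) \<in> carrier (G m)"
  by (rule lift_closed[OF mono_coords_update])

lemma lift_factor_closed:
  assumes "mono_coords (Suc k) n m w"
  shows "lift_factor k m w l \<in> carrier (G m)"
proof -
  interpret group "G m" by (rule group_G)
  show ?thesis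
    unfolding lift_factor_def
    using lift_update_closed[OF assms upstep_mono] lift_update_closed[OF assms mono_on_const] by simp
qed

lemma lift_Suc_natural:
  assumes IH: "\<And>w. mono_coords k n m w \<Longrightarrow> lift k m' (\<lambda>j i. w j (\<theta> i)) = act m' m \<theta> (lift k m w)"
    and w: "mono_coords (Suc k) n m w" and \<theta>: "\<theta> \<in> delta_hom m' m"
  shows "lift (Suc k) m' (\<lambda>j i. w j (\<theta> i)) = act m' m \<theta> (lift (Suc k) m w)"
proof -
  interpret h: group_hom "G m" "G m'" "act m' m \<theta>" by (rule act_group_hom[OF \<theta>])
  define w' where "w' = (\<lambda>j i. w j (\<theta> i))"
  have w': "mono_coords (Suc k) n m' w'" unfolding w'_def using mono_coords_pullback[OF w \<theta>] .
  have lift_update: "act m' m \<theta> (lift k m (w(Suc k := u))) = lift k m' (w'(Suc k := u \<circ> \<theta>))"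
    if "mono_on {..m} u" for u
  proof -
    have "(\<lambda>j i. (w(Suc k := u)) j (\<theta> i)) = w'(Suc k := u \<circ> \<theta>)" by (auto simp: w'_def fun_eq_iff)
    then show ?thesis using IH[OF mono_coords_update[OF w that]] by simp
  qed
  have zero: "act m' m \<theta> (lift k m (w(Suc k := (\<lambda>_. 0)))) = lift k m' (w'(Suc k := (\<lambda>_. 0)))"
    using lift_update[OF mono_on_const] by (simp add: comp_def)
  have factor: "act m' m \<theta> (lift_factor k m w l) = lift_factor k m' w' (lower_adjoint m' \<theta> l)" for l
  proof -
    have "lift k m' (w'(Suc k := upstep l \<circ> \<theta>)) = lift k m' (w'(Suc k := upstep (lower_adjoint m' \<theta> l)))"
      by (rule lift_cong) (simp add: upstep_pullback[OF \<theta>])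
    moreover have "lift k m (w(Suc k := upstep l)) \<in> carrier (G m)"
      "lift k m (w(Suc k := (\<lambda>_. 0))) \<in> carrier (G m)"
      using lift_update_closed[OF w upstep_mono] lift_update_closed[OF w mono_on_const] by auto
    ultimately show ?thesis
      unfolding lift_factor_def using lift_update[OF upstep_mono] zero by simp
  qed
  have top: "lift_factor k m' w' (Suc m') = \<one>\<^bsub>G m'\<^esub>"
  proof -
    have "lift k m' (w'(Suc k := upstep (Suc m'))) = lift k m' (w'(Suc k := (\<lambda>_. 0)))"
      by (rule lift_cong) (simp add: upstep_def)
    then show ?thesis
      unfolding lift_factor_def
      using lift_update_closed[OF w' mono_on_const] by simp
  qed
  let ?prod = "\<lambda>H w. mprod (G H) (map (\<lambda>l. lift_factor k H w l [^]\<^bsub>G H\<^esub> increment (w (Suc k)) l) [0..<Suc H])"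
  have "act m' m \<theta> (lift (Suc k) m w) =
      act m' m \<theta> (?prod m w) \<otimes>\<^bsub>G m'\<^esub> lift k m' (w'(Suc k := (\<lambda>_. 0)))"
    unfolding lift_Suc zero[symmetric] using lift_factor_closed[OF w] lift_update_closed[OF w mono_on_const]
    by (simp add: group.mprod_closed[OF group_G] image_subset_iff del: upt_Suc)
  also have "act m' m \<theta> (?prod m w)
      = mprod (G m') (map (\<lambda>l. lift_factor k m' w' (lower_adjoint m' \<theta> l) [^]\<^bsub>G m'\<^esub> increment (w (Suc k)) l) [0..<Suc m])"
    using lift_factor_closed[OF w]
    by (subst hom_mprod[OF act_hom[OF \<theta>] group_G group_G])
      (auto simp: factor h.hom_int_pow simp del: upt_Suc intro!: arg_cong[where f = "mprod (G m')"])
  also have "\<dots> = ?prod m' w'"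
    using group.telescope[where A = "lift_factor k m' w'" and v = "w (Suc k)", OF group_G \<theta> lift_factor_closed[OF w'] top]
    by (simp add: w'_def del: upt_Suc)
  also have "?prod m' w' \<otimes>\<^bsub>G m'\<^esub> lift k m' (w'(Suc k := (\<lambda>_. 0))) = lift (Suc k) m' w'"
    unfolding lift_Suc by simp
  finally show ?thesis unfolding w'_def ..
qed

lemma lift_natural:
  "mono_coords k n m w \<Longrightarrow> \<theta> \<in> delta_hom m' m \<Longrightarrow>
   lift k m' (\<lambda>j i. w j (\<theta> i)) = act m' m \<theta> (lift k m w)"
proof (induction k arbitrary: w)
  case 0
  have "run_length n (\<lambda>j i. w j (\<theta> i)) i = run_length n w (\<theta> i)" for i
    by (rule run_length_cong) simp
  then have "restrict (run_length n (\<lambda>j i. w j (\<theta> i))) {..m'} = delta_comp m' (restrict (run_length n w) {..m}) \<theta>"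
    using "0.prems"(2) by (auto simp: delta_comp_def delta_hom_def PiE_iff)
  then show ?case using act_comp[OF run_length_delta_hom[OF "0.prems"(1)] "0.prems"(2) y] by simp
next
  case (Suc k)
  then show ?case using lift_Suc_natural by blast
qed

lemma lift_zero: "lift k m (\<lambda>_ _. 0) = \<one>\<^bsub>G m\<^esub>"
proof (induction k)
  case 0
  have "restrict (run_length n (\<lambda>_ _. 0)) {..m} = restrict (\<lambda>_. 0) {..m}"
    by (auto simp: run_length_zero restrict_def)
  then show ?case using act_const by simp
next
  case (Suc k)
  interpret group "G m" by (rule group_G)
  have zero_update: "(\<lambda>_ _. 0::nat)(Suc k := (\<lambda>_. 0)) = (\<lambda>_ _. 0)" by auto
  show ?case
    unfolding lift_Suc zero_update Suc.IH
    by (subst mprod_all_one) (auto simp: increment_def pred_val_def simp del: upt_Suc)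
qed

lemma lift_Suc_upstep:
  assumes w: "mono_coords (Suc k) n m w" and "p \<le> Suc m" and step: "\<And>i. i \<le> m \<Longrightarrow> w (Suc k) i = upstep p i"
  shows "lift (Suc k) m w = lift k m w"
proof -
  interpret group "G m" by (rule group_G)
  let ?zero = "lift k m (w(Suc k := (\<lambda>_. 0)))"
  have incr: "increment (w (Suc k)) l = increment (upstep p) l" if "l \<le> m" for l
    using that step by (auto simp: increment_def pred_val_def)
  have "lift (Suc k) m w = (if p < Suc m then lift_factor k m w p else \<one>\<^bsub>G m\<^esub>) \<otimes>\<^bsub>G m\<^esub> ?zero"
    unfolding lift_Suc
    using lift_factor_closed[OF w] incr increment_upstep[OF \<open>p \<le> Suc m\<close>]
    by (subst mprod_upt_single[where p = p]) auto
  also have "\<dots> = lift k m (w(Suc k := upstep p))"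
    using lift_update_closed[OF w upstep_mono] lift_update_closed[OF w mono_on_const] \<open>p \<le> Suc m\<close>
    by (auto simp: lift_factor_def m_assoc upstep_def fun_upd_def intro: lift_cong)
  also have "\<dots> = lift k m w"
    by (rule lift_cong) (simp add: step)
  finally show ?thesis .
qed

lemma lift_upsteps:
  assumes steps: "\<And>j i. i \<le> n \<Longrightarrow> w j i = upstep j i"
  shows "lift n n w = y"
proof -
  have mono: "mono_coords k n n w" for k
    using upstep_mono[of "{..n}"] by (auto simp: mono_coords_def mono_on_def steps)
  have "lift k n w = lift 0 n w" if "k \<le> n" for k
    using that
  proof (induction k)
    case (Suc k)
    then show ?case using lift_Suc_upstep[OF mono, of "Suc k"] steps by simp
  qed simp
  moreover have "restrict (run_length n w) {..n} = delta_id n"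
    using run_length_upstep[of w] steps by (auto simp: delta_id_def restrict_def)
  ultimately show ?thesis using act_id[OF y] by simp
qed

end

definition superlevel :: "(nat \<Rightarrow> nat option) \<Rightarrow> nat \<Rightarrow> nat \<Rightarrow> nat" where
  "superlevel b j i = (case b i of None \<Rightarrow> 0 | Some v \<Rightarrow> upstep j v)"

lemma i_elem_Bset: "i_elem n \<in> Bset n n"
  by (auto simp: Bset_def i_elem_def ran_def dom_def split: if_splits)

lemma empty_Bset: "Map.empty \<in> Bset n m"
  by (auto simp: Bset_def)

lemma B_pre_Bset:
  assumes \<theta>: "\<theta> \<in> delta_hom k m" and b: "b \<in> Bset n m"
  shows "B_pre k \<theta> b \<in> Bset n k"
proof -
  have "\<theta> i \<le> \<theta> j" if "i \<le> j" "j \<le> k" for i j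
    using \<theta> that by (auto simp: delta_hom_def mono_on_def)
  then show ?thesis
    using b unfolding Bset_def B_pre_def by (auto simp: dom_def ran_def split: if_splits)
qed

context dummy_lift begin

definition dummy_elem :: "nat \<Rightarrow> (nat \<Rightarrow> nat option) \<Rightarrow> 'g" where
  "dummy_elem m b = (if b \<in> Bset n m then lift n m (superlevel b) else undefined)"

lemma dummy_elem_carrier: "dummy_elem \<in> dummy_carrier G act n"
proof -
  have natural: "dummy_elem k (B_pre k \<theta> b) = act k m \<theta> (dummy_elem m b)"
    if \<theta>: "\<theta> \<in> delta_hom k m" and b: "b \<in> Bset n m" for k m \<theta> b
  proof -
    have "lift n k (superlevel (B_pre k \<theta> b)) = lift n k (\<lambda>j i. superlevel b j (\<theta> i))"
      by (rule lift_cong) (simp add: superlevel_def B_pre_def)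
    then show ?thesis
      using lift_natural[OF mono_coords_top \<theta>] B_pre_Bset[OF \<theta> b] b by (simp add: dummy_elem_def)
  qed
  have "superlevel Map.empty = (\<lambda>_ _. 0)" by (auto simp: superlevel_def fun_eq_iff)
  then show ?thesis
    unfolding dummy_carrier_def
    using lift_closed[OF mono_coords_top] natural lift_zero empty_Bset by (auto simp: dummy_elem_def)
qed

lemma dummy_proj_dummy_elem: "dummy_proj n dummy_elem = y"
  using lift_upsteps[of "superlevel (i_elem n)"] i_elem_Bset
  by (simp add: dummy_proj_def dummy_elem_def superlevel_def i_elem_def)

end

theorem mainTheorem11:
  fixes G :: "nat \<Rightarrow> 'g monoid" and act :: "nat \<Rightarrow> nat \<Rightarrow> (nat \<Rightarrow> nat) \<Rightarrow> 'g \<Rightarrow> 'g"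
  assumes "simplicial_group G act"
    and "carrier (G 0) = {\<one>\<^bsub>G 0\<^esub>}"
  shows "\<forall>n. dummy_proj n ` carrier (dummy G act n) = carrier (G n)"
proof
  fix n
  show "dummy_proj n ` carrier (dummy G act n) = carrier (G n)"
  proof
    show "dummy_proj n ` carrier (dummy G act n) \<subseteq> carrier (G n)"
      using i_elem_Bset[of n] by (auto simp: dummy_def dummy_carrier_def dummy_proj_def)
  next
    show "carrier (G n) \<subseteq> dummy_proj n ` carrier (dummy G act n)"
    proof
      fix y assume "y \<in> carrier (G n)"
      then interpret dummy_lift G act n y using assms by unfold_locales
      show "y \<in> dummy_proj n ` carrier (dummy G act n)"
        using dummy_elem_carrier dummy_proj_dummy_elem by (force simp: dummy_def)
    qed
  qed
qed

end
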